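(* For every positive integer $m$, $$G_{-m}(\lambda)=(1+\zeta)^{m+1}\sum_{k=1}^m\left\{\!\left\{{m+k\atop k}\right\}\!\right\}\zeta^k,\qquad\text{where }\zeta=\frac{\lambda}{1-\lambda},$$ as an identity of formal power series (equivalently, of rational functions) in $\lambda$.
   Context: For an integer $m$ let $R_m(z)=\sum_{n\ge1} n^{n-m}\frac{z^n}{n!}$. Let $T(z)=\sum_{n\ge1}n^{n-1}\frac{z^n}{n!}$, which satisfies $T(z)=z e^{T(z)}$, so its compositional inverse is $z=\lambda e^{-\lambda}$. Define $G_m(\lambda):=R_m(\lambda e^{-\lambda})$, so $G_m(T(z))=R_m(z)$; then $\zeta=\lambda/(1-\lambda)$ equals $G_0(\lambda)$. The second-order Stirling numbers (associated Stirling numbers of the second kind) $\{\{{n\atop k}\}\}$ are the numbers of partitions of an $n$-element set into $k$ blocks each of size at least $2$; equivalently $\{\{{0\atop 0}\}\}=1$, $\{\{{n\atop k}\}\}=0$ when $n<0$ or $k\le 0$ with $(n,k)\neq(0,0)$, and $\{\{{n\atop k}\}\}=k\{\{{n-1\atop k}\}\}+(n-1)\{\{{n-2\atop k-1}\}\}$ for $n\ge1$. *)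

theory Defs
  imports "HOL-Computational_Algebra.Formal_Power_Series"
begin

definition R :: "int \<Rightarrow> real fps" where
  "R m = Abs_fps (\<lambda>n. if n = 0 then 0 else (of_nat n) powi (int n - m) / fact n)"

definition G :: "int \<Rightarrow> real fps" where
  "G m = fps_compose (R m) (fps_X * fps_exp (-1))"

definition zeta :: "real fps" where
  "zeta = fps_X * inverse (1 - fps_X)"

fun assoc_stirling :: "nat \<Rightarrow> nat \<Rightarrow> nat" where
  "assoc_stirling 0 k = (if k = 0 then 1 else 0)"
| "assoc_stirling (Suc 0) k = k * assoc_stirling 0 k"
| "assoc_stirling (Suc (Suc n)) 0 = 0"
| "assoc_stirling (Suc (Suc n)) (Suc k) =
     Suc k * assoc_stirling (Suc n) (Suc k) + Suc n * assoc_stirling n k"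

end

(*
  Since z R_m'(z) = R_(m-1)(z) and (lambda e^(-lambda))' = e^(-lambda) (1 - lambda), composing
  with z = lambda e^(-lambda) turns z d/dz into zeta d/dlambda, so G_(m-1) = zeta G_m'.
  The start G_1 = lambda is the inversion identity T(lambda e^(-lambda)) = lambda; coefficientwise
  it says that an N-th finite difference annihilates the polynomial n^(N-1).  Hence G_0 = zeta,
  and zeta' = (1 + zeta)^2.  Writing P_m for the Stirling polynomial of the claim, one step of
  the induction on m reduces it to P_(m+1)(z) = (m+1) z P_m(z) + (1 + z) z P_m'(z), which is the
  recurrence of the associated Stirling numbers read off coefficientwise.
*)

theory Submission
  imports Defs
begin

unbundle fps_syntax

lemma alternating_binomial_power_sum_eq_0:
  fixes N k :: nat
  assumes "k < N"
  shows "(\<Sum>n\<le>N. (-1) ^ n * of_nat (N choose n) * of_nat n ^ k) = (0 :: 'a::field_char_0)"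
proof -
  have "(1 - fps_exp (1::'a)) ^ N = (\<Sum>n\<le>N. of_nat (N choose n) * (- fps_exp 1) ^ n)"
    using binomial_ring[of "- fps_exp (1::'a)" 1 N] by simp
  also have "\<dots> =
      (\<Sum>n\<le>N. fps_const ((-1) ^ n * of_nat (N choose n)) * fps_exp (of_nat n))"
    by (simp add: power_minus' fps_exp_power_mult fps_of_nat mult_ac
             flip: fps_const_neg fps_const_power fps_const_mult)
  \<comment> \<open>(1 - e^x)^N has order N, and its coefficient of x^k is the sum divided by k!\<close>
  finally have
    "(\<Sum>n\<le>N. fps_const ((-1) ^ n * of_nat (N choose n)) * fps_exp (of_nat n)) $ k = (0::'a)"
    using startsby_zero_power_prefix[of "1 - fps_exp (1::'a)" N] assms by (simp add: fps_exp_def)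
  then show ?thesis
    by (simp add: fps_sum_nth flip: sum_divide_distrib)
qed

lemma neg_one_power_diff:
  assumes "k \<le> n"
  shows "(-1 :: 'a::ring_1) ^ (n - k) = (-1) ^ n * (-1) ^ k"
proof -
  have "n + k = (n - k) + 2 * k"
    using assms by simp
  then have "(-1 :: 'a) ^ n * (-1) ^ k = (-1) ^ (n - k) * (-1) ^ (2 * k)"
    by (metis power_add)
  then show ?thesis
    by simp
qed

lemma fps_nth_X_exp_power:
  "((fps_X * fps_exp c) ^ i) $ n =
     (if n < i then 0 else (of_nat i * c :: 'a :: field_char_0) ^ (n - i) / fact (n - i))"
  by (simp add: power_mult_distrib fps_exp_power_mult fps_X_power_mult_nth)

lemma R_1_nth: "R 1 $ n = (if n = 0 then 0 else real n ^ (n - 1) / fact n)"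
  by (auto simp: R_def power_int_def nat_diff_distrib)

lemma G_1_nth_term:
  \<comment> \<open>For N = 1 the term i = 0 would break the pattern, since 0 ^ 0 = 1.\<close>
  assumes "i \<le> N" "2 \<le> N"
  shows "R 1 $ i * ((fps_X * fps_exp (-1)) ^ i) $ N =
         (-1) ^ N / fact N * ((-1) ^ i * of_nat (N choose i) * of_nat i ^ (N - 1))"
proof (cases "i = 0")
  case False
  have "R 1 $ i * ((fps_X * fps_exp (-1)) ^ i) $ N =
        (-1) ^ (N - i) * (real i ^ (i - 1) * real i ^ (N - i)) / (fact i * fact (N - i))"
    using assms False by (simp add: R_1_nth fps_nth_X_exp_power power_minus')
  also have "real i ^ (i - 1) * real i ^ (N - i) = real i ^ (N - 1)"
    using assms False by (simp flip: power_add)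
  finally show ?thesis
    using assms by (simp add: binomial_fact neg_one_power_diff)
qed (use assms in \<open>simp add: R_1_nth\<close>)

lemma G_1: "G 1 = fps_X"
proof (rule fps_ext)
  fix N
  have G_1_nth: "G 1 $ N = (\<Sum>i\<le>N. R 1 $ i * ((fps_X * fps_exp (-1)) ^ i) $ N)"
    by (simp add: G_def fps_compose_nth atLeast0AtMost)
  show "G 1 $ N = fps_X $ N"
  proof (cases "N < 2")
    case True
    then consider "N = 0" | "N = 1" by linarith
    then show ?thesis
      unfolding G_1_nth by cases (simp_all add: R_1_nth fps_nth_X_exp_power)
  next
    case False
    then have "G 1 $ N =
        (-1) ^ N / fact N * (\<Sum>i\<le>N. (-1) ^ i * of_nat (N choose i) * of_nat i ^ (N - 1))"
      by (simp add: G_1_nth G_1_nth_term sum_distrib_left)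
    also have "\<dots> = 0"
      using False by (simp add: alternating_binomial_power_sum_eq_0)
    finally show ?thesis
      using False by simp
  qed
qed

lemma R_minus_1: "R (m - 1) = fps_X * fps_deriv (R m)"
proof (rule fps_ext)
  fix n
  have "real n powi (int n - (m - 1)) = real n * real n powi (int n - m)" if "n > 0"
    using that by (simp add: power_int_add_1' algebra_simps flip: power_int_add_1')
  then show "R (m - 1) $ n = (fps_X * fps_deriv (R m)) $ n"
    by (cases n) (simp_all add: R_def)
qed

lemma one_plus_zeta: "1 + zeta = inverse (1 - fps_X)"
proof -
  have "inverse (1 - fps_X :: real fps) * (1 - fps_X) = 1"
    by (simp add: inverse_mult_eq_1)
  then show ?thesis
    by (simp add: zeta_def algebra_simps)
qed

lemma fps_deriv_zeta: "fps_deriv zeta = (1 + zeta) ^ 2"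
proof -
  have "fps_deriv zeta = fps_deriv (1 + zeta)"
    by simp
  then show ?thesis
    by (simp add: one_plus_zeta fps_inverse_deriv)
qed

lemma G_minus_1: "G (m - 1) = zeta * fps_deriv (G m)"
proof -
  define g :: "real fps" where "g = fps_X * fps_exp (-1)"
  have g0: "g $ 0 = 0"
    by (simp add: g_def)
  have "zeta * fps_deriv g = fps_X * fps_exp (-1) * (inverse (1 - fps_X) * (1 - fps_X))"
    by (simp add: g_def zeta_def algebra_simps flip: fps_const_neg)
  also have "\<dots> = g"
    by (simp add: g_def inverse_mult_eq_1)
  finally have zeta_g: "zeta * fps_deriv g = g" .
  have "G (m - 1) = (fps_X * fps_deriv (R m)) oo g"
    by (simp add: G_def g_def R_minus_1)
  also have "\<dots> = (fps_X oo g) * (fps_deriv (R m) oo g)"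
    by (rule fps_compose_mult_distrib[OF g0])
  also have "\<dots> = zeta * ((fps_deriv (R m) oo g) * fps_deriv g)"
    using g0 zeta_g by (simp add: mult.left_commute)
  also have "\<dots> = zeta * fps_deriv (G m)"
    by (simp add: G_def fps_compose_deriv[OF g0] flip: g_def)
  finally show ?thesis .
qed

lemma G_0: "G 0 = zeta"
  using G_minus_1[of 1] by (simp add: G_1)

lemma assoc_stirling_eq_0: "n < 2 * k \<Longrightarrow> assoc_stirling n k = 0"
  by (induction n k rule: assoc_stirling.induct) auto

lemma assoc_stirling_0_right: "n \<noteq> 0 \<Longrightarrow> assoc_stirling n 0 = 0"
  by (cases "(n, 0 :: nat)" rule: assoc_stirling.cases) auto

lemma assoc_stirling_Suc_Suc:
  "assoc_stirling (Suc n) (Suc k) = Suc k * assoc_stirling n (Suc k) + n * assoc_stirling (n - 1) k"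
  by (cases n) auto

definition assoc_stirling_poly :: "nat \<Rightarrow> 'a::comm_ring_1 \<Rightarrow> 'a" where
  "assoc_stirling_poly m z = (\<Sum>k = 1..m. of_nat (assoc_stirling (m + k) k) * z ^ k)"

text \<open>The Euler operator z d/dz applied to \<^const>\<open>assoc_stirling_poly\<close>.\<close>
definition assoc_stirling_poly_theta :: "nat \<Rightarrow> 'a::comm_ring_1 \<Rightarrow> 'a" where
  "assoc_stirling_poly_theta m z = (\<Sum>k = 1..m. of_nat (k * assoc_stirling (m + k) k) * z ^ k)"

lemma assoc_stirling_poly_Suc:
  assumes "m \<noteq> 0"
  shows "assoc_stirling_poly (Suc m) z =
           of_nat (Suc m) * z * assoc_stirling_poly m z + (1 + z) * assoc_stirling_poly_theta m z"
proof -
  let ?S = assoc_stirling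
  have "assoc_stirling_poly (Suc m) z =
        (\<Sum>j = 0..m. of_nat (?S (Suc m + Suc j) (Suc j)) * z ^ Suc j)"
    unfolding assoc_stirling_poly_def by (subst sum.shift_bounds_cl_Suc_ivl [symmetric]) simp
  also have "\<dots> = (\<Sum>j = 0..m. of_nat (Suc j * ?S (m + Suc j) (Suc j)) * z ^ Suc j)
                + (\<Sum>j = 0..m. of_nat ((m + Suc j) * ?S (m + j) j) * z ^ Suc j)"
    by (simp add: assoc_stirling_Suc_Suc algebra_simps flip: sum.distrib)
  also have "(\<Sum>j = 0..m. of_nat (Suc j * ?S (m + Suc j) (Suc j)) * z ^ Suc j) =
             assoc_stirling_poly_theta m z"
    unfolding assoc_stirling_poly_theta_def
    by (subst sum.shift_bounds_cl_Suc_ivl [symmetric]) (simp add: assoc_stirling_eq_0)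
  also have "(\<Sum>j = 0..m. of_nat ((m + Suc j) * ?S (m + j) j) * z ^ Suc j) =
             z * (of_nat (Suc m) * assoc_stirling_poly m z + assoc_stirling_poly_theta m z)"
    using assms
    by (simp add: sum.atLeast_Suc_atMost assoc_stirling_0_right assoc_stirling_poly_def
                  assoc_stirling_poly_theta_def sum_distrib_left algebra_simps flip: sum.distrib)
  finally show ?thesis
    by (simp add: algebra_simps)
qed

lemma fps_deriv_assoc_stirling_poly:
  fixes z :: "'a::comm_ring_1 fps"
  shows "z * fps_deriv (assoc_stirling_poly m z) = assoc_stirling_poly_theta m z * fps_deriv z"
  unfolding assoc_stirling_poly_def assoc_stirling_poly_theta_def fps_deriv_sum
            sum_distrib_left sum_distrib_right
proof (rule sum.cong [OF refl])
  fix k assume "k \<in> {1..m}"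
  then obtain j where "k = Suc j"
    using not0_implies_Suc by fastforce
  then show "z * fps_deriv (of_nat (assoc_stirling (m + k) k) * z ^ k) =
             of_nat (k * assoc_stirling (m + k) k) * z ^ k * fps_deriv z"
    by (simp add: fps_deriv_power' del: power_Suc) (simp add: algebra_simps)
qed

lemma zeta_deriv_assoc_stirling_term:
  assumes "m \<noteq> 0"
  shows "zeta * fps_deriv ((1 + zeta) ^ (m + 1) * assoc_stirling_poly m zeta) =
           (1 + zeta) ^ (m + 2) * assoc_stirling_poly (Suc m) zeta"
proof -
  let ?P = "assoc_stirling_poly m zeta" and ?\<Theta> = "assoc_stirling_poly_theta m zeta"
  have "zeta * fps_deriv ((1 + zeta) ^ (m + 1) * ?P) =
        zeta * fps_deriv ((1 + zeta) ^ (m + 1)) * ?P +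
        (1 + zeta) ^ (m + 1) * (zeta * fps_deriv ?P)"
    by (simp add: algebra_simps)
  also have "\<dots> = zeta * (of_nat (Suc m) * (1 + zeta) ^ 2 * (1 + zeta) ^ m) * ?P
                  + (1 + zeta) ^ (m + 1) * (?\<Theta> * (1 + zeta) ^ 2)"
    by (simp add: fps_deriv_power' fps_deriv_assoc_stirling_poly fps_deriv_zeta del: power_Suc)
  also have "\<dots> = (1 + zeta) ^ (m + 2) * (of_nat (Suc m) * zeta * ?P + (1 + zeta) * ?\<Theta>)"
    by (simp add: algebra_simps power2_eq_square)
  also have "\<dots> = (1 + zeta) ^ (m + 2) * assoc_stirling_poly (Suc m) zeta"
    by (simp only: assoc_stirling_poly_Suc [OF assms])
  finally show ?thesis .
qed

theorem proposition1:
  fixes m :: nat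
  assumes "m \<ge> 1"
  shows "G (- int m) = (1 + zeta) ^ (m + 1) *
           (\<Sum>k = 1..m. of_nat (assoc_stirling (m + k) k) * zeta ^ k)"
  using assms unfolding assoc_stirling_poly_def [symmetric]
proof (induction m rule: dec_induct)
  case base
  have "G (- int 1) = zeta * (1 + zeta) ^ 2"
    using G_minus_1 [of 0] by (simp add: G_0 fps_deriv_zeta)
  then show ?case
    by (simp add: assoc_stirling_poly_def mult.commute power2_eq_square)
next
  case (step m)
  have "- int (Suc m) = - int m - 1" and "Suc m + 1 = m + 2"
    by simp_all
  then show ?case
    using step by (simp only: G_minus_1 zeta_deriv_assoc_stirling_term not_one_le_zero)
qed

end
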